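(* Let $\lambda>0$ be a constant and $\mu(t,x,y)$ a $C^\infty$ function on an open set $V\subset\mathbb{R}^3$, and let $U\subset V$ be a connected open set on which $\mu\neq\lambda$. On $U$ define the Riemannian metric $$g = (\lambda-\mu(t,x,y))^{-2}\,dt^2 + \lambda\,dx^2 + \lambda\,dy^2$$ and the $(1,1)$ tensor $A$ by $A(\partial_t)=\mu(t,x,y)\,\partial_t$, $A(\partial_x)=\lambda\,\partial_x$, $A(\partial_y)=\lambda\,\partial_y$. Then $A$ is a Codazzi tensor for $g$.
   Context: A symmetric $(1,1)$ tensor $A$ (self-adjoint with respect to $g$) is a Codazzi tensor if $(\nabla_X A)Y = (\nabla_Y A)X$ for all vector fields $X,Y$, where $\nabla$ is the Levi-Civita connection of $g$. *)

theory Defs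
  imports "HOL-Analysis.Analysis"
begin

text \<open>Coordinates on R^3 are indexed by the numeral type 3: index 0 is t, 1 is x, 2 is y.
  A point is p :: real^3; the coordinate vector field d_i is axis i 1.\<close>

definition partial :: "3 \<Rightarrow> (real^3 \<Rightarrow> real) \<Rightarrow> real^3 \<Rightarrow> real" where
  "partial i f p = deriv (\<lambda>s. f (p + s *\<^sub>R axis i 1)) 0"

fun Ck_on :: "nat \<Rightarrow> (real^3) set \<Rightarrow> (real^3 \<Rightarrow> real) \<Rightarrow> bool" where
  "Ck_on 0 V f = continuous_on V f"
| "Ck_on (Suc n) V f = (continuous_on V f \<and>
      (\<forall>i. \<forall>p\<in>V. (\<lambda>s. f (p + s *\<^sub>R axis i 1)) differentiable (at 0)) \<and>
      (\<forall>i. Ck_on n V (partial i f)))"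

definition smooth_on :: "(real^3) set \<Rightarrow> (real^3 \<Rightarrow> real) \<Rightarrow> bool" where
  "smooth_on V f \<longleftrightarrow> (\<forall>n. Ck_on n V f)"

text \<open>A metric is given by components g i j (g i j p = g(d_i, d_j) at p);
  a (1,1) tensor by components A i j with A(d_j) = sum_i A i j d_i.\<close>

definition metric_matrix :: "(3 \<Rightarrow> 3 \<Rightarrow> real^3 \<Rightarrow> real) \<Rightarrow> real^3 \<Rightarrow> real^3^3" where
  "metric_matrix g p = (\<chi> i j. g i j p)"

definition christoffel :: "(3 \<Rightarrow> 3 \<Rightarrow> real^3 \<Rightarrow> real) \<Rightarrow> 3 \<Rightarrow> 3 \<Rightarrow> 3 \<Rightarrow> real^3 \<Rightarrow> real" where
  "christoffel g i k l p = (1/2) * (\<Sum>m\<in>UNIV. matrix_inv (metric_matrix g p) $ i $ m *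
      (partial k (g m l) p + partial l (g m k) p - partial m (g k l) p))"

definition dirD :: "(real^3 \<Rightarrow> real^3) \<Rightarrow> (real^3 \<Rightarrow> real) \<Rightarrow> real^3 \<Rightarrow> real" where
  "dirD X f p = (\<Sum>k\<in>UNIV. X p $ k * partial k f p)"

definition covD :: "(3 \<Rightarrow> 3 \<Rightarrow> real^3 \<Rightarrow> real) \<Rightarrow> (real^3 \<Rightarrow> real^3) \<Rightarrow> (real^3 \<Rightarrow> real^3) \<Rightarrow> real^3 \<Rightarrow> real^3" where
  "covD g X Y p = (\<chi> i. dirD X (\<lambda>q. Y q $ i) p +
      (\<Sum>k\<in>UNIV. \<Sum>l\<in>UNIV. christoffel g i k l p * X p $ k * Y p $ l))"

definition applyT :: "(3 \<Rightarrow> 3 \<Rightarrow> real^3 \<Rightarrow> real) \<Rightarrow> real^3 \<Rightarrow> real^3 \<Rightarrow> real^3" where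
  "applyT A p v = (\<chi> i. \<Sum>j\<in>UNIV. A i j p * v $ j)"

definition covD_tensor :: "(3 \<Rightarrow> 3 \<Rightarrow> real^3 \<Rightarrow> real) \<Rightarrow> (3 \<Rightarrow> 3 \<Rightarrow> real^3 \<Rightarrow> real) \<Rightarrow>
    (real^3 \<Rightarrow> real^3) \<Rightarrow> (real^3 \<Rightarrow> real^3) \<Rightarrow> real^3 \<Rightarrow> real^3" where
  "covD_tensor g A X Y p = covD g X (\<lambda>q. applyT A q (Y q)) p - applyT A p (covD g X Y p)"

definition gform :: "(3 \<Rightarrow> 3 \<Rightarrow> real^3 \<Rightarrow> real) \<Rightarrow> real^3 \<Rightarrow> real^3 \<Rightarrow> real^3 \<Rightarrow> real" where
  "gform g p v w = (\<Sum>i\<in>UNIV. \<Sum>j\<in>UNIV. g i j p * v $ i * w $ j)"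

definition smooth_vf_on :: "(real^3) set \<Rightarrow> (real^3 \<Rightarrow> real^3) \<Rightarrow> bool" where
  "smooth_vf_on U X \<longleftrightarrow> (\<forall>k. smooth_on U (\<lambda>p. X p $ k))"

definition codazzi_tensor :: "(real^3) set \<Rightarrow> (3 \<Rightarrow> 3 \<Rightarrow> real^3 \<Rightarrow> real) \<Rightarrow> (3 \<Rightarrow> 3 \<Rightarrow> real^3 \<Rightarrow> real) \<Rightarrow> bool" where
  "codazzi_tensor U g A \<longleftrightarrow>
     (\<forall>p\<in>U. \<forall>v w. gform g p (applyT A p v) w = gform g p v (applyT A p w)) \<and>
     (\<forall>X Y. smooth_vf_on U X \<longrightarrow> smooth_vf_on U Y \<longrightarrow>
        (\<forall>p\<in>U. covD_tensor g A X Y p = covD_tensor g A Y X p))"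

end

theory Submission
  imports Defs
begin

text \<open>Both g and A are diagonal in the coordinates (t, x, y), with eigenvalues a = (mu, lam, lam)
  for A. For a diagonal tensor the difference (nabla_X A) Y - (nabla_Y A) X is bilinear in X and Y
  without derivatives of X or Y, with coefficients
  delta(i,l) d_k a_i - delta(i,k) d_l a_i + Gamma^i_kl (a_l - a_k).
  Only g_tt = (lam - mu)^-2 varies, so the only nonzero Christoffel symbols are
  Gamma^t_tl = Gamma^t_lt = d_l mu / (lam - mu) and Gamma^i_tt (i \<noteq> t). The latter meets the
  factor a_t - a_t = 0, while the former cancels d_l mu against a_l - a_t = lam - mu.\<close>

lemma partial_eqI:
  "((\<lambda>s. f (p + s *\<^sub>R axis k 1)) has_real_derivative D) (at 0) \<Longrightarrow> partial k f p = D"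
  by (simp add: partial_def DERIV_imp_deriv)

lemma has_real_derivative_partial:
  "(\<lambda>s. f (p + s *\<^sub>R axis k 1)) differentiable (at 0) \<Longrightarrow>
   ((\<lambda>s. f (p + s *\<^sub>R axis k 1)) has_real_derivative partial k f p) (at 0)"
  unfolding partial_def using DERIV_deriv_iff_real_differentiable by blast

lemma partial_const: "partial k (\<lambda>q. c) p = 0"
  by (rule partial_eqI) simp

lemma partial_mult:
  assumes "(\<lambda>s. f (p + s *\<^sub>R axis k 1)) differentiable (at 0)"
    and "(\<lambda>s. h (p + s *\<^sub>R axis k 1)) differentiable (at 0)"
  shows "partial k (\<lambda>q. f q * h q) p = partial k f p * h p + f p * partial k h p"
proof (rule partial_eqI)
  show "((\<lambda>s. f (p + s *\<^sub>R axis k 1) * h (p + s *\<^sub>R axis k 1)) has_real_derivative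
      partial k f p * h p + f p * partial k h p) (at 0)"
    using DERIV_mult[OF assms[THEN has_real_derivative_partial]] by (simp add: algebra_simps)
qed

lemma partial_inverse_square:
  assumes "(\<lambda>s. f (p + s *\<^sub>R axis k 1)) differentiable (at 0)" and "f p \<noteq> c"
  shows "partial k (\<lambda>q. 1 / (c - f q)^2) p = 2 * partial k f p / (c - f p)^3"
proof (rule partial_eqI)
  define d where "d = c - f p"
  have "d \<noteq> 0" "f p = c - d" using assms(2) by (auto simp: d_def)
  then show "((\<lambda>s. 1 / (c - f (p + s *\<^sub>R axis k 1))^2) has_real_derivative
      2 * partial k f p / (c - f p)^3) (at 0)"
    by (auto intro!: derivative_eq_intros has_real_derivative_partial[OF assms(1)]
        simp: field_simps power2_eq_square power3_eq_cube)
qed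

lemma smooth_on_differentiable_along_axis:
  assumes "smooth_on V f" and "p \<in> V"
  shows "(\<lambda>s. f (p + s *\<^sub>R axis k 1)) differentiable (at 0)"
proof -
  have "Ck_on (Suc 0) V f" using assms(1) unfolding smooth_on_def by blast
  then show ?thesis using assms(2) by simp
qed

lemma exhaust_3_from_0: "i = (0::3) \<or> i = 1 \<or> i = 2"
  using exhaust_3[of i] by auto

lemma sum_UNIV_3: "sum f (UNIV::3 set) = f 0 + f 1 + f 2"
proof -
  have "f 3 = f 0" by (rule arg_cong) simp
  then show ?thesis using sum_3[of f] by (simp add: ac_simps)
qed

lemma sum_delta_left:
  "(\<Sum>k\<in>(UNIV::'n::finite set). (if i = k then a else 0) * h k) = a * (h i :: real)"
proof -
  have "(\<Sum>k\<in>UNIV. (if i = k then a else 0) * h k) = (\<Sum>k\<in>UNIV. if k = i then a * h i else 0)"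
    by (rule sum.cong) auto
  also have "\<dots> = a * h i" by simp
  finally show ?thesis .
qed

lemma matrix_inv_diagonal:
  fixes d :: "'n::finite \<Rightarrow> real"
  assumes "\<And>i. d i \<noteq> 0"
  shows "matrix_inv (\<chi> i j. if i = j then d i else 0) = (\<chi> i j. if i = j then 1 / d i else 0)"
proof -
  let ?M = "(\<chi> i j. if i = j then d i else 0) :: real^'n^'n"
  let ?D = "(\<chi> i j. if i = j then 1 / d i else 0) :: real^'n^'n"
  have inverse: "?M ** ?D = mat 1" "?D ** ?M = mat 1"
    using assms by (auto simp: matrix_matrix_mult_def mat_def vec_eq_iff sum_delta_left)
  then have two_sided: "?M ** matrix_inv ?M = mat 1 \<and> matrix_inv ?M ** ?M = mat 1"
    unfolding matrix_inv_def by (rule someI[where x = ?D, OF conjI])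
  have "matrix_inv ?M = (matrix_inv ?M ** ?M) ** ?D"
    using inverse by (simp add: matrix_mul_assoc[symmetric] matrix_mul_rid)
  then show ?thesis using two_sided by (simp add: matrix_mul_lid)
qed

lemma applyT_diagonal:
  assumes "\<And>i j. A i j q = (if i = j then a i q else 0)"
  shows "applyT A q v $ i = a i q * v $ i"
  by (simp add: applyT_def assms sum_delta_left)

lemma gform_applyT_diagonal:
  assumes "\<And>i j. i \<noteq> j \<Longrightarrow> g i j p = 0"
    and "\<And>i j. A i j p = (if i = j then a i p else 0)"
  shows "gform g p (applyT A p v) w = gform g p v (applyT A p w)"
proof -
  have "g i j p * (a i p * v $ i) * w $ j = g i j p * v $ i * (a j p * w $ j)" for i j
    by (cases "i = j") (simp_all add: assms(1))
  then show ?thesis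
    by (simp only: gform_def applyT_diagonal[of A p a, OF assms(2)])
qed

lemma christoffel_diagonal:
  assumes "\<And>i j. i \<noteq> j \<Longrightarrow> g i j p = 0" and "\<And>i. g i i p \<noteq> 0"
  shows "christoffel g i k l p =
    (partial k (g i l) p + partial l (g i k) p - partial i (g k l) p) / (2 * g i i p)"
proof -
  have "metric_matrix g p = (\<chi> i j. if i = j then g i i p else 0)"
    by (auto simp: metric_matrix_def vec_eq_iff assms(1))
  then have "matrix_inv (metric_matrix g p) = (\<chi> i j. if i = j then 1 / g i i p else 0)"
    using matrix_inv_diagonal[of "\<lambda>i. g i i p"] assms(2) by simp
  then show ?thesis by (simp add: christoffel_def sum_delta_left)
qed

lemma christoffel_symmetric:
  assumes "\<And>k l. g k l = g l k"
  shows "christoffel g i k l p = christoffel g i l k p"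
  unfolding christoffel_def by (simp add: assms add.commute)

lemma covD_tensor_diagonal:
  assumes A: "\<And>i j q. A i j q = (if i = j then a i q else 0)"
    and "\<And>k. (\<lambda>s. a i (p + s *\<^sub>R axis k 1)) differentiable (at 0)"
    and "\<And>k. (\<lambda>s. Y (p + s *\<^sub>R axis k 1) $ i) differentiable (at 0)"
  shows "covD_tensor g A X Y p $ i =
    (\<Sum>k\<in>UNIV. X p $ k * partial k (a i) p) * Y p $ i +
    (\<Sum>k\<in>UNIV. \<Sum>l\<in>UNIV. christoffel g i k l p * X p $ k * Y p $ l * (a l p - a i p))"
proof -
  have applyT_A: "applyT A q v $ j = a j q * v $ j" for q v j
    by (intro applyT_diagonal A)
  have "partial k (\<lambda>q. applyT A q (Y q) $ i) p =
      partial k (a i) p * Y p $ i + a i p * partial k (\<lambda>q. Y q $ i) p" for k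
    using partial_mult[OF assms(2,3)] by (simp add: applyT_A)
  then show ?thesis
    by (simp add: covD_tensor_def covD_def dirD_def applyT_A sum_UNIV_3
        algebra_simps)
qed

definition diagonal_codazzi_coefficient ::
    "(3 \<Rightarrow> 3 \<Rightarrow> real^3 \<Rightarrow> real) \<Rightarrow> (3 \<Rightarrow> real^3 \<Rightarrow> real) \<Rightarrow> real^3 \<Rightarrow>
      3 \<Rightarrow> 3 \<Rightarrow> 3 \<Rightarrow> real" where
  "diagonal_codazzi_coefficient g a p i k l =
    (if l = i then partial k (a i) p else 0) - (if k = i then partial l (a i) p else 0)
    + christoffel g i k l p * (a l p - a k p)"

lemma covD_tensor_diagonal_commute:
  assumes A: "\<And>i j q. A i j q = (if i = j then a i q else 0)"
    and g_sym: "\<And>k l. g k l = g l k"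
    and a_diff: "\<And>i k. (\<lambda>s. a i (p + s *\<^sub>R axis k 1)) differentiable (at 0)"
    and X_diff: "\<And>i k. (\<lambda>s. X (p + s *\<^sub>R axis k 1) $ i) differentiable (at 0)"
    and Y_diff: "\<And>i k. (\<lambda>s. Y (p + s *\<^sub>R axis k 1) $ i) differentiable (at 0)"
    and coefficients: "\<And>i k l. diagonal_codazzi_coefficient g a p i k l = 0"
  shows "covD_tensor g A X Y p = covD_tensor g A Y X p"
  unfolding vec_eq_iff
proof
  fix i
  have "covD_tensor g A X Y p $ i - covD_tensor g A Y X p $ i =
      (\<Sum>k\<in>UNIV. \<Sum>l\<in>UNIV. X p $ k * Y p $ l * diagonal_codazzi_coefficient g a p i k l)"
    using exhaust_3_from_0[of i]
    by (elim disjE; simp add: diagonal_codazzi_coefficient_def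
        covD_tensor_diagonal[OF A a_diff X_diff] covD_tensor_diagonal[OF A a_diff Y_diff]
        christoffel_symmetric[OF g_sym] sum_UNIV_3 algebra_simps)
  then show "covD_tensor g A X Y p $ i = covD_tensor g A Y X p $ i"
    by (simp add: coefficients)
qed

lemma diagonal_codazzi_coefficient_warped_metric:
  fixes lam :: real
  assumes "lam \<noteq> 0" and "mu p \<noteq> lam"
    and mu_diff: "\<And>k. (\<lambda>s. mu (p + s *\<^sub>R axis k 1)) differentiable (at 0)"
    and g: "\<And>i j q. g i j q = (if i \<noteq> j then 0 else if i = 0 then 1 / (lam - mu q)^2 else lam)"
    and a: "a = (\<lambda>i q. if i = 0 then mu q else lam)"
  shows "diagonal_codazzi_coefficient g a p i k l = 0"
proof -
  define c where "c = lam - mu p"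
  have c: "c \<noteq> 0" "mu p = lam - c" using assms(2) by (auto simp: c_def)
  have partial_g: "partial k (g m n) p = (if m = 0 \<and> n = 0 then 2 * partial k mu p / c^3 else 0)"
    for k m n
  proof (cases "m = 0 \<and> n = 0")
    case True
    then have "g m n = (\<lambda>q. 1 / (lam - mu q)^2)" by (intro ext) (simp add: g)
    then show ?thesis using True partial_inverse_square[OF mu_diff assms(2)] by (simp add: c_def)
  next
    case False
    then have "g m n = (\<lambda>q. if m \<noteq> n then 0 else lam)" by (auto simp: g)
    then show ?thesis using False by (auto simp: partial_const)
  qed
  have partial_a: "partial k (a i) p = (if i = 0 then partial k mu p else 0)" for k i
    by (simp add: a partial_const)
  have "christoffel g i k l p =
      (partial k (g i l) p + partial l (g i k) p - partial i (g k l) p) / (2 * g i i p)"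
    by (rule christoffel_diagonal) (use assms(1) c(1) in \<open>auto simp: g c_def\<close>)
  also have "\<dots> = ((if i = 0 \<and> l = 0 then 2 * partial k mu p / c^3 else 0)
      + (if i = 0 \<and> k = 0 then 2 * partial l mu p / c^3 else 0)
      - (if k = 0 \<and> l = 0 then 2 * partial i mu p / c^3 else 0))
      / (2 * (if i = 0 then 1 / c^2 else lam))"
    by (simp add: partial_g g c_def)
  finally have christoffel: "christoffel g i k l p = \<dots>" .
  have a_at: "a j p = (if j = 0 then lam - c else lam)" for j
    by (simp add: a c(2))
  show ?thesis
    using exhaust_3_from_0[of i] exhaust_3_from_0[of k] exhaust_3_from_0[of l] c(1) assms(1)
    unfolding diagonal_codazzi_coefficient_def christoffel partial_a a_at
    by (auto simp: field_simps power2_eq_square power3_eq_cube)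
qed

theorem proposition4p1:
  fixes lam :: real and mu :: "real^3 \<Rightarrow> real" and V U :: "(real^3) set"
    and g A :: "3 \<Rightarrow> 3 \<Rightarrow> real^3 \<Rightarrow> real"
  assumes "lam > 0"
    and "open V" and "smooth_on V mu"
    and "open U" and "connected U" and "U \<subseteq> V"
    and "\<forall>p\<in>U. mu p \<noteq> lam"
    and "\<And>i j p. g i j p = (if i \<noteq> j then 0 else if i = 0 then 1 / (lam - mu p)^2 else lam)"
    and "\<And>i j p. A i j p = (if i \<noteq> j then 0 else if i = 0 then mu p else lam)"
  shows "codazzi_tensor U g A"
proof -
  define a where "a = (\<lambda>(i::3) q. if i = 0 then mu q else lam)"
  have A: "A i j q = (if i = j then a i q else 0)" for i j q
    using assms(9) by (simp add: a_def)
  have g_sym: "g k l = g l k" for k l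
    using assms(8) by (intro ext) auto
  have g_diagonal: "g i j p = 0" if "i \<noteq> j" for i j p
    using assms(8) that by simp
  have "covD_tensor g A X Y p = covD_tensor g A Y X p"
    if X: "smooth_vf_on U X" and Y: "smooth_vf_on U Y" and p: "p \<in> U" for X Y p
  proof (rule covD_tensor_diagonal_commute[OF A g_sym])
    have mu_diff: "(\<lambda>s. mu (p + s *\<^sub>R axis k 1)) differentiable (at 0)" for k
      using smooth_on_differentiable_along_axis assms(3,6) p by blast
    then show "(\<lambda>s. a i (p + s *\<^sub>R axis k 1)) differentiable (at 0)" for i k
      by (cases "i = 0") (simp_all add: a_def)
    show "(\<lambda>s. X (p + s *\<^sub>R axis k 1) $ i) differentiable (at 0)"
      and "(\<lambda>s. Y (p + s *\<^sub>R axis k 1) $ i) differentiable (at 0)" for i k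
      using X Y p smooth_on_differentiable_along_axis unfolding smooth_vf_on_def by blast+
    show "diagonal_codazzi_coefficient g a p i k l = 0" for i k l
      by (rule diagonal_codazzi_coefficient_warped_metric[OF _ _ mu_diff assms(8) a_def])
        (use assms(1,7) p in auto)
  qed
  moreover have "gform g p (applyT A p v) w = gform g p v (applyT A p w)" for p v w
    by (rule gform_applyT_diagonal) (simp_all add: g_diagonal A)
  ultimately show ?thesis
    unfolding codazzi_tensor_def by blast
qed

end
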